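(* Let $A$ be any formula of $\mathbf{L_1}$. Every normal tableau for $A$ is finite (any process of extending branches of a tableau for $A$ by normal rule applications terminates after finitely many steps), and in a completed normal tableau for $A$ every branch ends either with a formula of the form $F[B_+,B_-]$ or with a Hintikka formula.
   Context: Formulas of $\mathbf{L_1}$: built from atomic formulas $\epsilon ab$ ($a,b$ name variables from a countably infinite list, possibly equal) with connectives $\vee,\sim$. Disjunctions may be associated in any way. Positive/negative parts (occurrences): $A$ is a positive part of $A$; if $B\vee C$ is a positive part then $B,C$ are positive parts; if $\sim B$ is a positive part then $B$ is a negative part; if $\sim B$ is a negative part then $B$ is a positive part. $F[B_+]$ ($G[B_-]$) denotes a formula with a specified occurrence of $B$ as positive (negative) part; $F[B_+,C_-]$ etc. denote specified non-overlapping occurrences. Tableaux: reduction rules ($\vee_-$) $G[B\vee C_-]$ $\mapsto$ two branches $G[B\vee C_-]\vee\sim B$, $G[B\vee C_-]\vee\sim C$; ($\epsilon_1$) $G[\epsilon ab_-]\mapsto G[\epsilon ab_-]\vee\sim\epsilon aa$; ($\epsilon_2$) $G[\epsilon ab_-,\epsilon bc_-]\mapsto G[\epsilon ab_-,\epsilon bc_-]\vee\sim\epsilon ac$; ($\epsilon_{3b}$) $G[\epsilon ab_-,\epsilon bb_-]\mapsto G[\epsilon ab_-,\epsilon bb_-]\vee\sim\epsilon ba$. A tableau for $A$ is a finite tree with root $A$ whose non-leaf nodes have as children the result of applying one rule to it. A tableau is normal if each rule application is made only to a formula not of the form $F[B_+,B_-]$ and only when the formula appended after $\sim$ (i.e.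 $B$, $C$, $\epsilon aa$, $\epsilon ac$ or $\epsilon ba$ respectively) does not already occur as a negative part of the formula being reduced. A normal tableau is completed if no further normal rule application is possible at the end of any branch. Hintikka formula: a formula $H$ such that (1) $H$ is not of the form $F[B_+,B_-]$; (2) if $B\vee C$ is a negative part of $H$ then $B$ or $C$ is; (3) if $\epsilon ab$ is a negative part then so is $\epsilon aa$; (4) if $\epsilon ab,\epsilon bc$ are negative parts then so is $\epsilon ac$; (5) if $\epsilon ab,\epsilon bb$ are negative parts then so is $\epsilon ba$. *)

theory Defs
  imports Main
begin

datatype fm = Eps nat nat | Or fm fm | Neg fm

text \<open>part A p B: B is a positive (p = True) / negative (p = False) part of A.\<close>
inductive part :: "fm \<Rightarrow> bool \<Rightarrow> fm \<Rightarrow> bool" for A :: fm where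
  self: "part A True A"
| disjL: "part A True (Or B C) \<Longrightarrow> part A True B"
| disjR: "part A True (Or B C) \<Longrightarrow> part A True C"
| neg: "part A p (Neg B) \<Longrightarrow> part A (\<not> p) B"

abbreviation pos_part :: "fm \<Rightarrow> fm \<Rightarrow> bool" where "pos_part A B \<equiv> part A True B"
abbreviation neg_part :: "fm \<Rightarrow> fm \<Rightarrow> bool" where "neg_part A B \<equiv> part A False B"

definition closed_fm :: "fm \<Rightarrow> bool" where
  "closed_fm F \<longleftrightarrow> (\<exists>B. pos_part F B \<and> neg_part F B)"

text \<open>rule_app G ns: some reduction rule applies to G, appending the formulas of ns
  (after negation), one per resulting branch; the children are  G \<or> \<sim>B  for B in ns.\<close>
inductive rule_app :: "fm \<Rightarrow> fm list \<Rightarrow> bool" where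
  or_neg: "neg_part G (Or B C) \<Longrightarrow> rule_app G [B, C]"
| eps1: "neg_part G (Eps a b) \<Longrightarrow> rule_app G [Eps a a]"
| eps2: "neg_part G (Eps a b) \<Longrightarrow> neg_part G (Eps b c) \<Longrightarrow> rule_app G [Eps a c]"
| eps3b: "neg_part G (Eps a b) \<Longrightarrow> neg_part G (Eps b b) \<Longrightarrow> rule_app G [Eps b a]"

definition normal_app :: "fm \<Rightarrow> fm list \<Rightarrow> bool" where
  "normal_app G ns \<longleftrightarrow> rule_app G ns \<and> \<not> closed_fm G \<and> (\<forall>B\<in>set ns. \<not> neg_part G B)"

definition normal_succ :: "fm \<Rightarrow> fm \<Rightarrow> bool" where
  "normal_succ G H \<longleftrightarrow> (\<exists>ns B. normal_app G ns \<and> B \<in> set ns \<and> H = Or G (Neg B))"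

datatype tab = Node fm "tab list"

fun root :: "tab \<Rightarrow> fm" where "root (Node G ts) = G"

fun num_nodes :: "tab \<Rightarrow> nat" where
  "num_nodes (Node G ts) = 1 + sum_list (map num_nodes ts)"

fun leaf_labels :: "tab \<Rightarrow> fm set" where
  "leaf_labels (Node G ts) = (if ts = [] then {G} else (\<Union>t\<in>set ts. leaf_labels t))"

inductive normal_tab :: "tab \<Rightarrow> bool" where
  leaf: "normal_tab (Node G [])"
| step: "normal_app G ns \<Longrightarrow> map root ts = map (\<lambda>B. Or G (Neg B)) ns \<Longrightarrow>
         (\<forall>t\<in>set ts. normal_tab t) \<Longrightarrow> normal_tab (Node G ts)"

definition normal_tableau_for :: "fm \<Rightarrow> tab \<Rightarrow> bool" where
  "normal_tableau_for A t \<longleftrightarrow> normal_tab t \<and> root t = A"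

definition completed :: "tab \<Rightarrow> bool" where
  "completed t \<longleftrightarrow> (\<forall>L\<in>leaf_labels t. \<not> (\<exists>ns. normal_app L ns))"

definition hintikka :: "fm \<Rightarrow> bool" where
  "hintikka H \<longleftrightarrow> \<not> closed_fm H
     \<and> (\<forall>B C. neg_part H (Or B C) \<longrightarrow> neg_part H B \<or> neg_part H C)
     \<and> (\<forall>a b. neg_part H (Eps a b) \<longrightarrow> neg_part H (Eps a a))
     \<and> (\<forall>a b c. neg_part H (Eps a b) \<and> neg_part H (Eps b c) \<longrightarrow> neg_part H (Eps a c))
     \<and> (\<forall>a b. neg_part H (Eps a b) \<and> neg_part H (Eps b b) \<longrightarrow> neg_part H (Eps b a))"

end

theory Submission
  imports Defs
begin

text \<open>Every negative part of every formula on a normal branch from \<open>A\<close> lies in the finite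
  universe of \<open>A\<close>: its subformulas together with all atoms over its names. A normal step
  appends \<open>\<sim>B\<close> for a \<open>B\<close> from this universe that was not yet a negative part, so the number
  of universe members that are not yet negative parts strictly decreases. Hence branches are
  shorter than this number, and since rules branch at most twice, tableaux are bounded in size.
  A leaf of a completed tableau admits no normal rule application; if it is not closed, this
  says precisely that it satisfies the Hintikka conditions.\<close>

fun subfms :: "fm \<Rightarrow> fm set" where
  "subfms (Eps a b) = {Eps a b}"
| "subfms (Or B C) = insert (Or B C) (subfms B \<union> subfms C)"
| "subfms (Neg B) = insert (Neg B) (subfms B)"

fun names :: "fm \<Rightarrow> nat set" where
  "names (Eps a b) = {a, b}"
| "names (Or B C) = names B \<union> names C"
| "names (Neg B) = names B"

lemma finite_subfms: "finite (subfms A)"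
  by (induction A) auto

lemma finite_names: "finite (names A)"
  by (induction A) auto

lemma subfms_refl: "A \<in> subfms A"
  by (cases A) auto

lemma subfms_trans: "B \<in> subfms C \<Longrightarrow> C \<in> subfms A \<Longrightarrow> B \<in> subfms A"
  by (induction A) auto

lemma subfms_OrD: "Or B C \<in> subfms A \<Longrightarrow> B \<in> subfms A \<and> C \<in> subfms A"
  using subfms_trans[of _ "Or B C" A] by (simp add: subfms_refl)

lemma subfms_NegD: "Neg B \<in> subfms A \<Longrightarrow> B \<in> subfms A"
  using subfms_trans[of _ "Neg B" A] by (simp add: subfms_refl)

lemma names_subfms_Eps: "Eps a b \<in> subfms A \<Longrightarrow> a \<in> names A \<and> b \<in> names A"
  by (induction A) auto

lemma part_subfms: "part A p B \<Longrightarrow> B \<in> subfms A"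
  by (induction rule: part.induct) (auto dest: subfms_OrD subfms_NegD intro: subfms_refl)

definition universe :: "fm \<Rightarrow> fm set" where
  "universe A = subfms A \<union> {Eps a b | a b. a \<in> names A \<and> b \<in> names A}"

lemma finite_universe: "finite (universe A)"
proof -
  have "{Eps a b | a b. a \<in> names A \<and> b \<in> names A} = (\<lambda>(a, b). Eps a b) ` (names A \<times> names A)"
    by auto
  then show ?thesis
    unfolding universe_def using finite_subfms finite_names by simp
qed

lemma universe_subfms_closed: "C \<in> universe A \<Longrightarrow> B \<in> subfms C \<Longrightarrow> B \<in> universe A"
  unfolding universe_def using subfms_trans by auto

lemma names_universe_Eps: "Eps a b \<in> universe A \<Longrightarrow> a \<in> names A \<and> b \<in> names A"
  unfolding universe_def using names_subfms_Eps by auto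

lemma Eps_in_universe: "a \<in> names A \<Longrightarrow> b \<in> names A \<Longrightarrow> Eps a b \<in> universe A"
  unfolding universe_def by blast

definition neg_parts :: "fm \<Rightarrow> fm set" where
  "neg_parts G = {B. neg_part G B}"

lemma neg_parts_universe: "neg_parts A \<subseteq> universe A"
  unfolding neg_parts_def universe_def using part_subfms by blast

lemma part_Or_Neg_cases:
  "part (Or G (Neg B)) p X \<Longrightarrow>
     (p \<and> X = Or G (Neg B)) \<or> part G p X \<or> (p \<and> X = Neg B) \<or> X \<in> subfms B"
  by (induction rule: part.induct) (auto dest: subfms_OrD subfms_NegD intro: part.intros simp: subfms_refl)

lemma part_Or_NegI: "part G p X \<Longrightarrow> part (Or G (Neg B)) p X"
  by (induction rule: part.induct) (auto intro: part.intros)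

lemma neg_part_appended: "neg_part (Or G (Neg B)) B"
  using part.neg[OF part.disjR[OF part.self]] by simp

lemma neg_parts_Or_Neg:
  "insert B (neg_parts G) \<subseteq> neg_parts (Or G (Neg B))"
  "neg_parts (Or G (Neg B)) \<subseteq> neg_parts G \<union> subfms B"
  unfolding neg_parts_def
  using neg_part_appended part_Or_NegI part_Or_Neg_cases by blast+

lemma rule_app_in_universe:
  assumes "neg_parts G \<subseteq> universe A" and "rule_app G ns" and "B \<in> set ns"
  shows "B \<in> universe A"
  using assms(2,3)
proof cases
  case (or_neg B' C)
  then have "Or B' C \<in> universe A" using assms(1) unfolding neg_parts_def by blast
  then show ?thesis using or_neg assms(3) universe_subfms_closed subfms_refl by auto
next
  case (eps1 a b)
  then have "a \<in> names A" using assms(1) names_universe_Eps unfolding neg_parts_def by blast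
  then show ?thesis using eps1 assms(3) Eps_in_universe by simp
next
  case (eps2 a b c)
  then have "a \<in> names A" "c \<in> names A"
    using assms(1) names_universe_Eps unfolding neg_parts_def by blast+
  then show ?thesis using eps2 assms(3) Eps_in_universe by simp
next
  case (eps3b a b)
  then have "a \<in> names A" "b \<in> names A"
    using assms(1) names_universe_Eps unfolding neg_parts_def by blast+
  then show ?thesis using eps3b assms(3) Eps_in_universe by simp
qed

definition missing :: "fm \<Rightarrow> fm \<Rightarrow> nat" where
  "missing A G = card (universe A - neg_parts G)"

lemma normal_succ_decreases_missing:
  assumes "neg_parts G \<subseteq> universe A" and "normal_succ G H"
  shows "neg_parts H \<subseteq> universe A" and "missing A H < missing A G"
proof -
  obtain ns B where app: "normal_app G ns" and B: "B \<in> set ns" and H: "H = Or G (Neg B)"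
    using assms(2) unfolding normal_succ_def by blast
  have new: "B \<notin> neg_parts G" using app B unfolding normal_app_def neg_parts_def by blast
  have B_univ: "B \<in> universe A"
    using rule_app_in_universe[OF assms(1)] app B unfolding normal_app_def by blast
  show "neg_parts H \<subseteq> universe A"
    using neg_parts_Or_Neg(2) assms(1) B_univ universe_subfms_closed unfolding H by blast
  have "universe A - neg_parts H \<subset> universe A - neg_parts G"
    using neg_parts_Or_Neg(1) new B_univ unfolding H by blast
  then show "missing A H < missing A G"
    unfolding missing_def by (simp add: finite_universe psubset_card_mono)
qed

lemma no_infinite_normal_branch:
  "\<not> (\<exists>f. f 0 = A \<and> (\<forall>n. normal_succ (f n) (f (Suc n))))"
proof
  assume "\<exists>f. f 0 = A \<and> (\<forall>n. normal_succ (f n) (f (Suc n)))"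
  then obtain f where f0: "f 0 = A" and succ: "\<And>n. normal_succ (f n) (f (Suc n))" by blast
  have "neg_parts (f n) \<subseteq> universe A \<and> missing A (f n) + n \<le> missing A A" for n
  proof (induction n)
    case 0
    then show ?case using f0 neg_parts_universe by simp
  next
    case (Suc n)
    then show ?case using normal_succ_decreases_missing succ by fastforce
  qed
  from this[of "Suc (missing A A)"] show False by simp
qed

lemma rule_app_length: "rule_app G ns \<Longrightarrow> length ns \<le> 2"
  by (induction rule: rule_app.induct) auto

lemma normal_tab_num_nodes_le:
  "normal_tab t \<Longrightarrow> neg_parts (root t) \<subseteq> universe A \<Longrightarrow> num_nodes t \<le> 3 ^ missing A (root t)"
proof (induction rule: normal_tab.induct)
  case (leaf G)
  then show ?case by simp
next
  case (step G ns ts)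
  have child: "neg_parts (root t) \<subseteq> universe A \<and> missing A (root t) < missing A G"
    if "t \<in> set ts" for t
  proof -
    have "root t \<in> (\<lambda>B. Or G (Neg B)) ` set ns"
      using step.hyps(2) that by (metis image_eqI list.set_map)
    then have "normal_succ G (root t)" using step.hyps(1) unfolding normal_succ_def by blast
    then show ?thesis using normal_succ_decreases_missing[OF step.prems] by simp
  qed
  show ?case
  proof (cases ts)
    case Nil
    then show ?thesis by simp
  next
    case (Cons t0 ts')
    then have "missing A (root t0) < missing A G" using child by simp
    then obtain k where k: "missing A G = Suc k" by (cases "missing A G") auto
    have "num_nodes t \<le> 3 ^ k" if t: "t \<in> set ts" for t
    proof -
      have "num_nodes t \<le> 3 ^ missing A (root t)" using step.IH t child by blast
      also have "\<dots> \<le> 3 ^ k" using child[OF t] k by (intro power_increasing) auto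
      finally show ?thesis .
    qed
    then have "sum_list (map num_nodes ts) \<le> length ts * 3 ^ k"
      using sum_list_mono[of ts num_nodes "\<lambda>_. 3 ^ k"] by (simp add: sum_list_triv)
    also have "\<dots> \<le> 2 * 3 ^ k"
      using rule_app_length step.hyps(1,2) unfolding normal_app_def by (metis length_map mult_le_mono1)
    finally have "sum_list (map num_nodes ts) \<le> 2 * 3 ^ k" .
    moreover have "1 \<le> (3::nat) ^ k" by simp
    ultimately have "1 + sum_list (map num_nodes ts) \<le> 3 * 3 ^ k" by linarith
    then show ?thesis using k by simp
  qed
qed

lemma hintikka_if_no_normal_app:
  assumes "\<nexists>ns. normal_app L ns" and "\<not> closed_fm L"
  shows "hintikka L"
proof -
  have some_known: "\<exists>B\<in>set ns. neg_part L B" if "rule_app L ns" for ns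
    using assms that unfolding normal_app_def by blast
  show ?thesis
    unfolding hintikka_def
  proof (intro conjI allI impI)
    fix B C assume "neg_part L (Or B C)"
    then show "neg_part L B \<or> neg_part L C" using some_known[OF rule_app.or_neg] by simp
  next
    fix a b assume "neg_part L (Eps a b)"
    then show "neg_part L (Eps a a)" using some_known[OF rule_app.eps1] by simp
  next
    fix a b c assume "neg_part L (Eps a b) \<and> neg_part L (Eps b c)"
    then show "neg_part L (Eps a c)" using some_known[OF rule_app.eps2] by auto
  next
    fix a b assume "neg_part L (Eps a b) \<and> neg_part L (Eps b b)"
    then show "neg_part L (Eps b a)" using some_known[OF rule_app.eps3b] by auto
  qed (rule assms(2))
qed

theorem theorem2p1:
  fixes A :: fm
  shows "\<not> (\<exists>f. f 0 = A \<and> (\<forall>n. normal_succ (f n) (f (Suc n))))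
    \<and> (\<exists>N. \<forall>t. normal_tableau_for A t \<longrightarrow> num_nodes t \<le> N)
    \<and> (\<forall>t. normal_tableau_for A t \<and> completed t \<longrightarrow>
          (\<forall>L\<in>leaf_labels t. closed_fm L \<or> hintikka L))"
proof (intro conjI)
  show "\<not> (\<exists>f. f 0 = A \<and> (\<forall>n. normal_succ (f n) (f (Suc n))))"
    by (rule no_infinite_normal_branch)
  show "\<exists>N. \<forall>t. normal_tableau_for A t \<longrightarrow> num_nodes t \<le> N"
  proof (intro exI allI impI)
    fix t assume "normal_tableau_for A t"
    then show "num_nodes t \<le> 3 ^ missing A A"
      using normal_tab_num_nodes_le[of t A] neg_parts_universe[of A]
      unfolding normal_tableau_for_def by auto
  qed
  show "\<forall>t. normal_tableau_for A t \<and> completed t \<longrightarrow>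
          (\<forall>L\<in>leaf_labels t. closed_fm L \<or> hintikka L)"
    using hintikka_if_no_normal_app unfolding completed_def by blast
qed

end
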